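(* Let $\ell\le d\le n/2$ and suppose $d$ is unknown to the algorithm. Any adaptive randomized group testing algorithm that, with probability at least $2/3$, detects $\ell$ defective items must make (in the worst case) at least $\ell\log(n/d)-1$ tests when the defective set has size $d$.
   Context: Group testing: items $X=[n]$, unknown defective set $I\subseteq X$ with $d=|I|$. A test $Q\subseteq X$ has answer $1$ if $Q\cap I\neq\emptyset$ and $0$ otherwise; the algorithm accesses $I$ only through tests, and in an adaptive algorithm tests may depend on previous answers. "Detects $\ell$ defective items" means it outputs $L\subseteq I$ with $|L|=\ell$. "$d$ is unknown" means the algorithm receives no information about $|I|$ and must succeed for every defective set $I$ with $|I|\ge \ell$. Logarithms are base 2. *)

theory Defs
  imports "HOL-Probability.Probability"
begin

text \<open>A deterministic adaptive group testing algorithm is a strategy: given the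
list of answers obtained so far, it either asks a test Q or stops and outputs a set L.\<close>

datatype action = Test "nat set" | Output "nat set"

type_synonym strategy = "bool list \<Rightarrow> action"

definition test_answer :: "nat set \<Rightarrow> nat set \<Rightarrow> bool" where
  "test_answer I Q \<longleftrightarrow> Q \<inter> I \<noteq> {}"

fun hist :: "strategy \<Rightarrow> nat set \<Rightarrow> nat \<Rightarrow> bool list" where
  "hist S I 0 = []"
| "hist S I (Suc k) =
     (case S (hist S I k) of
        Test Q \<Rightarrow> hist S I k @ [test_answer I Q]
      | Output L \<Rightarrow> hist S I k)"

definition is_output :: "action \<Rightarrow> bool" where
  "is_output a \<longleftrightarrow> (\<exists>L. a = Output L)"

definition halts :: "strategy \<Rightarrow> nat set \<Rightarrow> bool" where
  "halts S I \<longleftrightarrow> (\<exists>k. is_output (S (hist S I k)))"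

text \<open>Number of tests made before stopping (meaningful when the strategy halts).\<close>
definition num_tests :: "strategy \<Rightarrow> nat set \<Rightarrow> nat" where
  "num_tests S I = (LEAST k. is_output (S (hist S I k)))"

definition output_of :: "strategy \<Rightarrow> nat set \<Rightarrow> nat set" where
  "output_of S I = (case S (hist S I (num_tests S I)) of Output L \<Rightarrow> L | Test Q \<Rightarrow> {})"

definition detects :: "strategy \<Rightarrow> nat \<Rightarrow> nat set \<Rightarrow> bool" where
  "detects S l I \<longleftrightarrow> halts S I \<and> output_of S I \<subseteq> I \<and> card (output_of S I) = l"

text \<open>S makes at least q tests on I (a non-halting run makes infinitely many).\<close>
definition makes_at_least :: "strategy \<Rightarrow> nat set \<Rightarrow> real \<Rightarrow> bool" where
  "makes_at_least S I q \<longleftrightarrow> \<not> halts S I \<or> real (num_tests S I) \<ge> q"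

end

theory Submission
  imports Defs "HOL-Library.Sublist"
begin

text \<open>Fix the random seed, so that the algorithm is a deterministic strategy, and suppose it
stops after at most t tests on every d-subset. Its output is then a function of the t-bit answer
string, so at most 2^t sets L occur as outputs, and each L of size l lies in only
C(n-l, d-l) \<le> (d/n)^l C(n,d) of the d-subsets. When 2^t < (n/d)^l / 2 the strategy therefore
detects l defectives in at most half of the d-subsets. Averaging over the seed, the expected
number of d-subsets on which the algorithm succeeds is then at most C(n,d)/2, whereas success
probability 2/3 on each of them makes it at least 2/3 C(n,d).\<close>

lemma hist_prefix: "i \<le> j \<Longrightarrow> prefix (hist S I i) (hist S I j)"
proof (induction j rule: dec_induct)
  case (step j)
  then show ?case
    by (cases "S (hist S I j)") (auto intro: prefix_order.order_trans)
qed simp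

lemma length_hist: "j \<le> num_tests S I \<Longrightarrow> length (hist S I j) = j"
proof (induction j)
  case (Suc j)
  then have "\<not> is_output (S (hist S I j))"
    using not_less_Least[of j "\<lambda>k. is_output (S (hist S I k))"]
    by (simp add: num_tests_def)
  then obtain Q where "S (hist S I j) = Test Q"
    by (cases "S (hist S I j)") (auto simp: is_output_def)
  with Suc show ?case by simp
qed simp

lemma take_hist:
  assumes "i \<le> j" "j \<le> num_tests S I"
  shows "take i (hist S I j) = hist S I i"
proof -
  obtain ys where "hist S I j = hist S I i @ ys"
    using hist_prefix[OF assms(1), of S I] by (auto elim: prefixE)
  then show ?thesis
    using assms length_hist[of i S I] by simp
qed

lemma halts_is_output: "halts S I \<Longrightarrow> is_output (S (hist S I (num_tests S I)))"
  unfolding halts_def num_tests_def by (rule LeastI_ex)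

text \<open>The output of S when the answers to its tests are read off w in order.\<close>
definition output_on :: "strategy \<Rightarrow> bool list \<Rightarrow> nat set" where
  "output_on S w =
     (case S (take (LEAST j. is_output (S (take j w))) w) of Output L \<Rightarrow> L | Test Q \<Rightarrow> {})"

lemma output_on_hist_append:
  assumes "halts S I"
  shows "output_on S (hist S I (num_tests S I) @ ys) = output_of S I"
proof -
  let ?k = "num_tests S I"
  have take_eq: "take j (hist S I ?k @ ys) = hist S I j" if "j \<le> ?k" for j
    using take_hist[OF that order_refl] length_hist[of ?k S I] that by simp
  have "(LEAST j. is_output (S (take j (hist S I ?k @ ys)))) = ?k"
  proof (rule Least_equality)
    show "is_output (S (take ?k (hist S I ?k @ ys)))"
      using take_eq halts_is_output[OF assms] by simp
  next
    fix j assume "is_output (S (take j (hist S I ?k @ ys)))"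
    then show "?k \<le> j"
      using not_less_Least[of j "\<lambda>k. is_output (S (hist S I k))"] take_eq[of j]
      by (force simp: num_tests_def)
  qed
  then show ?thesis
    using take_eq by (simp add: output_on_def output_of_def)
qed

lemma output_of_in_output_on_image:
  assumes "halts S I" "num_tests S I \<le> t"
  shows "output_of S I \<in> output_on S ` {w. length w = t}"
proof
  let ?w = "hist S I (num_tests S I) @ replicate (t - num_tests S I) False"
  show "output_of S I = output_on S ?w"
    using output_on_hist_append[OF assms(1)] by simp
  show "?w \<in> {w. length w = t}"
    using assms(2) length_hist[of "num_tests S I" S I] by simp
qed

lemma card_supersets:
  assumes "finite X" "L \<subseteq> X" "card L \<le> d"
  shows "card {I. I \<subseteq> X \<and> card I = d \<and> L \<subseteq> I} = (card X - card L) choose (d - card L)"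
proof -
  have "finite L" using assms(1,2) finite_subset by blast
  have "bij_betw (\<lambda>J. J \<union> L) {J. J \<subseteq> X - L \<and> card J = d - card L}
          {I. I \<subseteq> X \<and> card I = d \<and> L \<subseteq> I}"
  proof (rule bij_betw_byWitness[where f' = "\<lambda>I. I - L"])
    show "(\<lambda>J. J \<union> L) ` {J. J \<subseteq> X - L \<and> card J = d - card L}
            \<subseteq> {I. I \<subseteq> X \<and> card I = d \<and> L \<subseteq> I}"
    proof clarify
      fix J assume "J \<subseteq> X - L" "card J = d - card L"
      moreover have "finite J" using \<open>J \<subseteq> X - L\<close> assms(1) finite_subset by blast
      moreover have "card (J \<union> L) = card J + card L"
        using \<open>finite J\<close> \<open>finite L\<close> \<open>J \<subseteq> X - L\<close> by (intro card_Un_disjoint) auto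
      ultimately show "J \<union> L \<subseteq> X \<and> card (J \<union> L) = d \<and> L \<subseteq> J \<union> L"
        using assms by auto
    qed
    show "(\<lambda>I. I - L) ` {I. I \<subseteq> X \<and> card I = d \<and> L \<subseteq> I}
            \<subseteq> {J. J \<subseteq> X - L \<and> card J = d - card L}"
      using assms \<open>finite L\<close> by (auto simp: card_Diff_subset finite_subset)
  qed auto
  then have "card {I. I \<subseteq> X \<and> card I = d \<and> L \<subseteq> I}
             = card {J. J \<subseteq> X - L \<and> card J = d - card L}"
    by (simp add: bij_betw_same_card)
  also have "\<dots> = (card X - card L) choose (d - card L)"
    using assms \<open>finite L\<close> by (simp add: n_subsets card_Diff_subset)
  finally show ?thesis .
qed

lemma card_detects_le:
  assumes "finite X" "l \<le> d"
    and within: "\<And>I. I \<subseteq> X \<Longrightarrow> card I = d \<Longrightarrow> halts S I \<and> num_tests S I \<le> t"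
  shows "card {I. I \<subseteq> X \<and> card I = d \<and> detects S l I} \<le> 2 ^ t * ((card X - l) choose (d - l))"
proof -
  define W where "W = {w :: bool list. length w = t}"
  define Outs where "Outs = {L \<in> output_on S ` W. L \<subseteq> X \<and> card L = l}"
  define supersets where "supersets L = {I. I \<subseteq> X \<and> card I = d \<and> L \<subseteq> I}" for L
  have "finite W" "card W = 2 ^ t"
    using finite_lists_length_eq[of "UNIV :: bool set" t] card_lists_length_eq[of "UNIV :: bool set" t]
    by (simp_all add: W_def)
  then have "finite Outs" "card Outs \<le> 2 ^ t"
    using card_mono[of "output_on S ` W" Outs] card_image_le[of W "output_on S"]
    by (auto simp: Outs_def)
  have "{I. I \<subseteq> X \<and> card I = d \<and> detects S l I} \<subseteq> (\<Union>L\<in>Outs. supersets L)"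
  proof
    fix I assume "I \<in> {I. I \<subseteq> X \<and> card I = d \<and> detects S l I}"
    then have I: "I \<subseteq> X" "card I = d" "detects S l I" by simp_all
    then have "output_of S I \<in> Outs"
      using output_of_in_output_on_image[of S I t] within
      by (auto simp: Outs_def W_def detects_def)
    moreover have "I \<in> supersets (output_of S I)"
      using I by (simp add: supersets_def detects_def)
    ultimately show "I \<in> (\<Union>L\<in>Outs. supersets L)" by blast
  qed
  then have "card {I. I \<subseteq> X \<and> card I = d \<and> detects S l I} \<le> card (\<Union>L\<in>Outs. supersets L)"
    using \<open>finite X\<close> \<open>finite Outs\<close>
    by (intro card_mono) (auto simp: supersets_def intro: finite_subset[of _ "Pow X"])
  also have "\<dots> \<le> (\<Sum>L\<in>Outs. card (supersets L))"
    by (rule card_UN_le[OF \<open>finite Outs\<close>])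
  also have "\<dots> = card Outs * ((card X - l) choose (d - l))"
    using card_supersets[OF \<open>finite X\<close>] \<open>l \<le> d\<close> by (simp add: Outs_def supersets_def)
  also have "\<dots> \<le> 2 ^ t * ((card X - l) choose (d - l))"
    using \<open>card Outs \<le> 2 ^ t\<close> by simp
  finally show ?thesis .
qed

lemma choose_diff_mult_power_le:
  "l \<le> d \<Longrightarrow> d \<le> n \<Longrightarrow> real ((n - l) choose (d - l)) * (real n / real d) ^ l \<le> real (n choose d)"
proof (induction l arbitrary: n d)
  case (Suc l)
  then obtain n' d' where nd: "n = Suc n'" "d = Suc d'"
    by (metis Suc_le_D le_trans)
  have choose_Suc: "real (n choose d) = real n / real d * real (n' choose d')"
    using Suc_times_binomial[of d' n'] nd by (simp add: field_simps flip: of_nat_mult)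
  show ?case
  proof (cases "d' = 0")
    case True
    then show ?thesis using Suc.prems nd choose_Suc by simp
  next
    case False
    have "real n / real d \<le> real n' / real d'"
      using nd False Suc.prems by (simp add: field_simps)
    then have power_le: "(real n / real d) ^ l \<le> (real n' / real d') ^ l"
      by (rule power_mono) simp
    have "real ((n - Suc l) choose (d - Suc l)) * (real n / real d) ^ Suc l
        = real ((n' - l) choose (d' - l)) * (real n / real d) ^ l * (real n / real d)"
      using nd by (simp add: mult_ac)
    also have "\<dots> \<le> real ((n' - l) choose (d' - l)) * (real n' / real d') ^ l * (real n / real d)"
      using power_le by (intro mult_right_mono mult_left_mono) auto
    also have "\<dots> \<le> real (n' choose d') * (real n / real d)"
      using Suc nd by (intro mult_right_mono) auto
    finally show ?thesis using choose_Suc by (simp add: mult.commute)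
  qed
qed simp

lemma card_detects_le_half:
  assumes "finite X" "l \<le> d" "d \<le> card X"
    and fast: "\<And>I. I \<subseteq> X \<Longrightarrow> card I = d \<Longrightarrow>
      halts S I \<and> real (num_tests S I) < real l * log 2 (real (card X) / real d) - 1"
  shows "real (card {I. I \<subseteq> X \<and> card I = d \<and> detects S l I}) \<le> real (card X choose d) / 2"
proof -
  define n where "n = card X"
  define q where "q = real l * log 2 (real n / real d) - 1"
  obtain I0 where "I0 \<subseteq> X" "card I0 = d"
    using obtain_subset_with_card_n[OF assms(3)] by metis
  then have "q > 0"
    using fast[of I0] by (simp add: q_def n_def)
  then have "l > 0" by (cases "l = 0") (auto simp: q_def)
  then have ratio_pos: "real n / real d > 0"
    using assms(2,3) by (simp add: n_def)
  define t where "t = nat \<lceil>q\<rceil> - 1"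
  have "real t < q"
    using \<open>q > 0\<close> by (simp add: t_def) linarith
  have within: "halts S I \<and> num_tests S I \<le> t" if "I \<subseteq> X" "card I = d" for I
    using fast[OF that] by (simp add: t_def q_def n_def) linarith
  have "2 ^ t = 2 powr real t" by (simp add: powr_realpow)
  also have "\<dots> < 2 powr q" using \<open>real t < q\<close> by simp
  also have "q = log 2 ((real n / real d) ^ l) - 1"
    using ratio_pos by (simp add: q_def log_nat_power)
  also have "2 powr (log 2 ((real n / real d) ^ l) - 1) = (real n / real d) ^ l / 2"
    using ratio_pos by (simp add: powr_diff)
  finally have two_power_less: "2 ^ t < (real n / real d) ^ l / 2" .
  have "real (card {I. I \<subseteq> X \<and> card I = d \<and> detects S l I})
      \<le> real (2 ^ t * ((n - l) choose (d - l)))"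
    unfolding n_def by (rule of_nat_mono) (rule card_detects_le[OF assms(1,2) within])
  also have "\<dots> = 2 ^ t * real ((n - l) choose (d - l))" by simp
  also have "\<dots> \<le> (real n / real d) ^ l / 2 * real ((n - l) choose (d - l))"
    using two_power_less by (intro mult_right_mono) auto
  also have "\<dots> \<le> real (n choose d) / 2"
    using choose_diff_mult_power_le[OF assms(2), of n] assms(3) by (simp add: n_def mult.commute)
  finally show ?thesis by (simp add: n_def)
qed

lemma (in prob_space) mult_card_le_if_prob_ge:
  assumes "finite D" "0 < p"
    and prob: "\<And>x. x \<in> D \<Longrightarrow> p \<le> prob {r \<in> space M. P r x}"
    and count: "\<And>r. r \<in> space M \<Longrightarrow> real (card {x \<in> D. P r x}) \<le> c"
  shows "p * real (card D) \<le> c"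
proof -
  define E where "E x = {r \<in> space M. P r x}" for x
  txt \<open>Non-measurable sets have measure 0, so p > 0 makes every event E x measurable.\<close>
  have "E x \<in> events" if "x \<in> D" for x
    using prob[OF that] \<open>0 < p\<close> measure_notin_sets[of "E x" M] by (force simp: E_def)
  then have integrable: "integrable M (indicator (E x) :: 'a \<Rightarrow> real)" if "x \<in> D" for x
    using that by (simp add: integrable_real_indicator emeasure_finite less_top[symmetric])
  have "p * real (card D) = (\<Sum>x\<in>D. p)" by simp
  also have "\<dots> \<le> (\<Sum>x\<in>D. expectation (indicator (E x)))"
    using prob by (intro sum_mono) (simp add: E_def Int_absorb2)
  also have "\<dots> = expectation (\<lambda>r. \<Sum>x\<in>D. indicator (E x) r)"
    using Bochner_Integration.integral_sum[of D M "\<lambda>x. indicator (E x)", OF integrable] by simp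
  also have "\<dots> \<le> c"
  proof (rule integral_le_const)
    show "integrable M (\<lambda>r. \<Sum>x\<in>D. indicator (E x) r :: real)"
      using integrable by auto
    have "(\<Sum>x\<in>D. indicator (E x) r :: real) = real (card {x \<in> D. P r x})" if "r \<in> space M" for r
      using that \<open>finite D\<close> by (simp add: E_def indicator_def sum.If_cases Int_def)
    then show "AE r in M. (\<Sum>x\<in>D. indicator (E x) r :: real) \<le> c"
      using count by (intro AE_I2) simp
  qed
  finally show ?thesis .
qed

theorem theorem6:
  fixes n d l :: nat and M :: "'r measure" and A :: "'r \<Rightarrow> strategy"
  assumes "prob_space M"
    and "l \<le> d" and "2 * d \<le> n"
    and success: "\<And>I. I \<subseteq> {1..n} \<Longrightarrow> card I \<ge> l \<Longrightarrow>
                    measure M {r \<in> space M. detects (A r) l I} \<ge> 2/3"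
  shows "\<exists>I r. I \<subseteq> {1..n} \<and> card I = d \<and> r \<in> space M \<and>
            makes_at_least (A r) I (real l * log 2 (real n / real d) - 1)"
proof (rule ccontr)
  assume "\<not> ?thesis"
  then have fast: "halts (A r) I \<and> real (num_tests (A r) I) < real l * log 2 (real n / real d) - 1"
    if "r \<in> space M" "I \<subseteq> {1..n}" "card I = d" for r I
    using that unfolding makes_at_least_def by force
  define D where "D = {I. I \<subseteq> {1..n} \<and> card I = d}"
  have "card D = n choose d" "card D > 0"
    using n_subsets[of "{1..n}" d] assms(3) by (simp_all add: D_def)
  have "2/3 * real (card D) \<le> real (n choose d) / 2"
  proof (rule prob_space.mult_card_le_if_prob_ge[OF \<open>prob_space M\<close>])
    show "finite D" by (simp add: D_def)
    show "2/3 \<le> measure M {r \<in> space M. detects (A r) l I}" if "I \<in> D" for I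
      using success that \<open>l \<le> d\<close> by (simp add: D_def)
    show "real (card {I \<in> D. detects (A r) l I}) \<le> real (n choose d) / 2" if "r \<in> space M" for r
      using card_detects_le_half[of "{1..n}" l d "A r"] fast[OF that] assms(2,3)
      by (simp add: D_def conj_assoc)
  qed simp
  then show False using \<open>card D = n choose d\<close> \<open>card D > 0\<close> by simp
qed

end
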